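(* Let $(X_i,\mathbf{x}_m,X_f)$ be an instance of the three-point Dubins path problem. In any optimal path of type $C_1S_2C_3S_4C_5$, the inverses of (the lines containing) the straight segments $S_2$ and $S_4$ with respect to the circle centered at $\mathbf{x}_m$ with radius $R_{\min}$ are two circles of equal radius.
   Context: A Dubins vehicle moves forward in the plane with unit speed and minimum turning radius $R_{\min}$: $\dot x=\cos\alpha$, $\dot y=\sin\alpha$, $\dot\alpha=u$, $|u|\le 1/R_{\min}$. A configuration is $X=(\mathbf{x},\alpha)$ with heading $\alpha\in[0,2\pi)$. The three-point Dubins path problem: given initial and final configurations $X_i,X_f$ and a midpoint $\mathbf{x}_m$, with pairwise Euclidean distances among $\mathbf{x}_i,\mathbf{x}_m,\mathbf{x}_f$ at least $4R_{\min}$, find a heading at $\mathbf{x}_m$ minimizing the length of the shortest Dubins path from $X_i$ through $\mathbf{x}_m$ with that heading to $X_f$. A path of type $C_1S_2C_3S_4C_5$ consists of minimum-radius arcs $C_1$ (starting at $X_i$), $C_3$ (passing through $\mathbf{x}_m$), $C_5$ (ending at $X_f$), each a left or right turn, connected by straight segments $S_2$ and $S_4$. Circle inversion with respect to the circle of center $O$ and radius $r$ maps $P\neq O$ to the point on ray $OP$ at distance $r^2/|OP|$ from $O$; the inverse of a segment means the inverse of the full line containing it. *)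

theory Defs
  imports "HOL-Analysis.Analysis"
begin

text \<open>A Dubins path of length L
(unit speed, arc-length parametrised on [0,L]) is a position curve p with
p' = cis(alpha t), where the real-valued heading lift alpha is (1/R)-Lipschitz,
i.e. |alpha'| \<le> 1/R almost everywhere (bounded turning rate).\<close>

definition dubins_path :: "real \<Rightarrow> real \<Rightarrow> (real \<Rightarrow> complex) \<Rightarrow> (real \<Rightarrow> real) \<Rightarrow> bool" where
  "dubins_path R L p \<alpha> \<longleftrightarrow> 0 \<le> L \<and>
     (\<forall>t\<in>{0..L}. (p has_vector_derivative cis (\<alpha> t)) (at t within {0..L})) \<and>
     (\<forall>s\<in>{0..L}. \<forall>t\<in>{0..L}. \<bar>\<alpha> s - \<alpha> t\<bar> \<le> \<bar>s - t\<bar> / R)"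

definition three_point_feasible ::
  "real \<Rightarrow> complex \<Rightarrow> real \<Rightarrow> complex \<Rightarrow> complex \<Rightarrow> real \<Rightarrow>
   real \<Rightarrow> (real \<Rightarrow> complex) \<Rightarrow> (real \<Rightarrow> real) \<Rightarrow> bool" where
  "three_point_feasible R xi ai xm xf af L p \<alpha> \<longleftrightarrow>
     dubins_path R L p \<alpha> \<and> p 0 = xi \<and> \<alpha> 0 = ai \<and>
     p L = xf \<and> cis (\<alpha> L) = cis af \<and> (\<exists>tm\<in>{0..L}. p tm = xm)"

definition three_point_optimal ::
  "real \<Rightarrow> complex \<Rightarrow> real \<Rightarrow> complex \<Rightarrow> complex \<Rightarrow> real \<Rightarrow>
   real \<Rightarrow> (real \<Rightarrow> complex) \<Rightarrow> (real \<Rightarrow> real) \<Rightarrow> bool" where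
  "three_point_optimal R xi ai xm xf af L p \<alpha> \<longleftrightarrow>
     three_point_feasible R xi ai xm xf af L p \<alpha> \<and>
     (\<forall>L' p' \<alpha>'. three_point_feasible R xi ai xm xf af L' p' \<alpha>' \<longrightarrow> L \<le> L')"

definition three_point_instance :: "real \<Rightarrow> complex \<Rightarrow> real \<Rightarrow> complex \<Rightarrow> complex \<Rightarrow> real \<Rightarrow> bool" where
  "three_point_instance R xi ai xm xf af \<longleftrightarrow> 0 < R \<and>
     ai \<in> {0..<2*pi} \<and> af \<in> {0..<2*pi} \<and>
     dist xi xm \<ge> 4*R \<and> dist xm xf \<ge> 4*R \<and> dist xi xf \<ge> 4*R"

definition type_CSCSC ::
  "real \<Rightarrow> complex \<Rightarrow> real \<Rightarrow> (real \<Rightarrow> complex) \<Rightarrow> (real \<Rightarrow> real) \<Rightarrow>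
   real \<Rightarrow> real \<Rightarrow> real \<Rightarrow> real \<Rightarrow> bool" where
  "type_CSCSC R xm L p \<alpha> t1 t2 t3 t4 \<longleftrightarrow>
     0 < t1 \<and> t1 < t2 \<and> t2 < t3 \<and> t3 < t4 \<and> t4 < L \<and>
     (\<exists>s1\<in>{-1,1::real}. \<forall>t\<in>{0..t1}. \<alpha> t = \<alpha> 0 + s1 * t / R) \<and>
     (\<forall>t\<in>{t1..t2}. \<alpha> t = \<alpha> t1) \<and>
     (\<exists>s3\<in>{-1,1::real}. \<forall>t\<in>{t2..t3}. \<alpha> t = \<alpha> t2 + s3 * (t - t2) / R) \<and>
     (\<forall>t\<in>{t3..t4}. \<alpha> t = \<alpha> t3) \<and>
     (\<exists>s5\<in>{-1,1::real}. \<forall>t\<in>{t4..L}. \<alpha> t = \<alpha> t4 + s5 * (t - t4) / R) \<and>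
     (\<exists>tm\<in>{t2<..<t3}. p tm = xm)"

definition line_through :: "complex \<Rightarrow> real \<Rightarrow> complex set" where
  "line_through a th = {a + of_real s * cis th | s. True}"

definition inversion :: "complex \<Rightarrow> real \<Rightarrow> complex \<Rightarrow> complex" where
  "inversion c r P = c + of_real (r^2 / (cmod (P - c))^2) * (P - c)"

definition inverse_set :: "complex \<Rightarrow> real \<Rightarrow> complex set \<Rightarrow> complex set" where
  "inverse_set c r S = inversion c r ` (S - {c})"

end

theory Submission
  imports Defs
begin

text \<open>Rotate the circle of the middle arc \<open>C\<^sub>3\<close> about \<open>x\<^sub>m\<close>: it still passes through \<open>x\<^sub>m\<close>, and
re-drawing the common tangents \<open>S\<^sub>2\<close>, \<open>S\<^sub>4\<close> with the fixed end circles \<open>C\<^sub>1\<close>, \<open>C\<^sub>5\<close> yields a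
one-parameter family of feasible paths of the same type. At an optimal path the first variation
of the length vanishes, and it equals the difference of the signed distances of the lines \<open>S\<^sub>2\<close>
and \<open>S\<^sub>4\<close> from \<open>x\<^sub>m\<close>. These distances are therefore equal, and nonzero, since otherwise the arc
\<open>C\<^sub>3\<close> could be dropped. A line at distance \<open>d \<noteq> 0\<close> from the centre inverts, in a circle of
radius \<open>R\<close>, to a circle through the centre of radius \<open>R\<^sup>2/(2d)\<close>.\<close>

text \<open>Signed distance from \<open>c\<close> of the line through \<open>P\<close> with direction \<open>\<theta>\<close>.\<close>

definition line_offset :: "complex \<Rightarrow> complex \<Rightarrow> real \<Rightarrow> real" where
  "line_offset c P \<theta> = Im (cnj (cis \<theta>) * (P - c))"

lemma inversion_horizontal_line_subset:
  fixes r b :: real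
  assumes "r > 0" "b \<noteq> 0" "Im u = b"
  shows "inversion 0 r u \<in> sphere (\<i> * of_real (r^2/(2*b))) (r^2/(2*\<bar>b\<bar>)) - {0}"
proof -
  define y where "y = inversion 0 r u"
  define x where "x = Re u"
  define q where "q = x^2 + b^2"
  have q: "(cmod u)^2 = q" using assms(3) by (simp add: cmod_def x_def q_def)
  have q0: "q > 0" using assms(2) by (simp add: q_def add_nonneg_pos)
  have ry: "Re y = r^2 * x / q" "Im y = r^2 * b / q" using assms(3) q by (auto simp: y_def inversion_def x_def)
  have "(r^2*x/q)^2 + (r^2/(2*b) - r^2*b/q)^2 = (r^2/(2*b))^2 + (r^2/q)^2 * (x^2 + b^2) - (r^2/q)^2 * q"
    using q0 assms(2) by (simp add: power2_diff power_divide field_simps power2_eq_square)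
  hence "(Re (\<i> * of_real (r^2/(2*b)) - y))^2 + (Im (\<i> * of_real (r^2/(2*b)) - y))^2 = (r^2/(2*\<bar>b\<bar>))^2"
    using ry by (simp add: q_def power_divide power_mult_distrib)
  hence "cmod (\<i> * of_real (r^2/(2*b)) - y) = r^2/(2*\<bar>b\<bar>)"
    by (simp add: cmod_def)
  moreover have "y \<noteq> 0" using ry assms q0 by auto
  ultimately show ?thesis by (simp add: dist_norm y_def)
qed

lemma sphere_subset_inversion_horizontal_line:
  fixes r b :: real
  assumes "r > 0" "b \<noteq> 0" "y \<in> sphere (\<i> * of_real (r^2/(2*b))) (r^2/(2*\<bar>b\<bar>)) - {0}"
  shows "y \<in> inversion 0 r ` {u. Im u = b}"
proof -
  define X where "X = Re y"
  define Y where "Y = Im y"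
  define n where "n = X^2 + Y^2"
  have n0: "n > 0" using assms(3) complex_neq_0 unfolding n_def X_def Y_def by auto
  have "(cmod (\<i> * of_real (r^2/(2*b)) - y))^2 = (r^2/(2*\<bar>b\<bar>))^2" using assms(3) by (simp add: dist_norm)
  hence "X^2 + (r^2/(2*b) - Y)^2 = (r^2/(2*b))^2"
    by (simp add: cmod_def X_def Y_def power2_eq_square power_divide)
  hence "n = 2*(r^2/(2*b))*Y" unfolding n_def by (simp add: power2_diff)
  hence eq: "n = r^2 * Y / b" using assms(2) by simp
  have Y0: "Y \<noteq> 0" using eq n0 by auto
  define u where "u = of_real (r^2/n) * y"
  have imu: "Im u = b" using eq Y0 assms by (simp add: u_def Y_def[symmetric])
  have "(cmod u)^2 = (r^2/n)^2 * (cmod y)^2"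
    unfolding u_def norm_mult norm_of_real by (simp add: power_mult_distrib power_divide)
  also have "(cmod y)^2 = n" by (simp add: cmod_power2 n_def X_def Y_def)
  finally have norm_u: "(cmod u)^2 = (r^2/n)^2 * n" .
  define a where "a = r^2 / (cmod u)^2"
  have a: "a * (r^2/n) = 1" using norm_u n0 assms(1) by (simp add: a_def power2_eq_square)
  have "of_real a * u = of_real (a * (r^2/n)) * y" by (simp add: u_def)
  hence "inversion 0 r u = y" unfolding a by (simp add: inversion_def a_def)
  thus ?thesis using imu by force
qed

lemma inversion_image_horizontal_line:
  fixes r b :: real
  assumes "r > 0" "b \<noteq> 0"
  shows "inversion 0 r ` {u. Im u = b} = sphere (\<i> * of_real (r^2/(2*b))) (r^2/(2*\<bar>b\<bar>)) - {0}"
proof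
  show "inversion 0 r ` {u. Im u = b} \<subseteq> sphere (\<i> * of_real (r^2/(2*b))) (r^2/(2*\<bar>b\<bar>)) - {0}"
    using inversion_horizontal_line_subset[OF assms] by (simp add: image_subset_iff)
  show "sphere (\<i> * of_real (r^2/(2*b))) (r^2/(2*\<bar>b\<bar>)) - {0} \<subseteq> inversion 0 r ` {u. Im u = b}"
    using sphere_subset_inversion_horizontal_line[OF assms] by (simp add: subset_iff)
qed

definition frame :: "complex \<Rightarrow> real \<Rightarrow> complex \<Rightarrow> complex" where
  "frame c \<theta> u = c + cis \<theta> * u"

lemma frame_inverse: "frame c \<theta> (cnj (cis \<theta>) * (y - c)) = y"
  by (simp add: frame_def mult.assoc[symmetric] cis_cnj cis_mult)

lemma dist_frame: "dist (frame c \<theta> u) (frame c \<theta> v) = dist u v"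
proof -
  have "frame c \<theta> u - frame c \<theta> v = cis \<theta> * (u - v)" by (simp add: frame_def algebra_simps)
  thus ?thesis by (simp add: dist_norm norm_mult)
qed

lemma bij_frame: "bij (frame c \<theta>)"
  by (rule bijI') (metis frame_inverse dist_frame dist_eq_0_iff)+

lemma frame_image_sphere: "frame c \<theta> ` sphere a \<rho> = sphere (frame c \<theta> a) \<rho>"
proof (intro equalityI subsetI)
  fix y assume "y \<in> sphere (frame c \<theta> a) \<rho>"
  thus "y \<in> frame c \<theta> ` sphere a \<rho>" by (metis dist_frame frame_inverse image_eqI mem_sphere)
qed (auto simp: dist_frame)

lemma inversion_frame: "inversion c r (frame c \<theta> u) = frame c \<theta> (inversion 0 r u)"
  by (simp add: inversion_def frame_def norm_mult algebra_simps)

lemma line_through_frame: "line_through P \<theta> = frame c \<theta> ` {u. Im u = line_offset c P \<theta>}"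
proof (intro equalityI subsetI)
  fix z assume "z \<in> line_through P \<theta>"
  then obtain s where z: "z = P + of_real s * cis \<theta>" unfolding line_through_def by auto
  have "z = frame c \<theta> (cnj (cis \<theta>) * (P - c) + of_real s)"
    using frame_inverse[of c \<theta> P] by (simp add: z frame_def algebra_simps)
  moreover have "Im (cnj (cis \<theta>) * (P - c) + of_real s) = line_offset c P \<theta>" by (simp add: line_offset_def)
  ultimately show "z \<in> frame c \<theta> ` {u. Im u = line_offset c P \<theta>}" by blast
next
  fix z assume "z \<in> frame c \<theta> ` {u. Im u = line_offset c P \<theta>}"
  then obtain u where u: "Im u = line_offset c P \<theta>" "z = frame c \<theta> u" by auto
  define s where "s = Re u - Re (cnj (cis \<theta>) * (P - c))"
  have u_eq: "u = cnj (cis \<theta>) * (P - c) + of_real s"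
    using u unfolding s_def line_offset_def by (simp add: complex_eq_iff)
  have "z = frame c \<theta> (cnj (cis \<theta>) * (P - c)) + of_real s * cis \<theta>"
    unfolding u(2) u_eq frame_def by (simp add: algebra_simps)
  hence "z = P + of_real s * cis \<theta>" by (simp only: frame_inverse)
  thus "z \<in> line_through P \<theta>" unfolding line_through_def by auto
qed

lemma inverse_set_line_through:
  assumes "r > 0" "line_offset c P \<theta> \<noteq> 0"
  defines "b \<equiv> line_offset c P \<theta>"
  shows "inverse_set c r (line_through P \<theta>)
           = sphere (c + cis \<theta> * (\<i> * of_real (r^2/(2*b)))) (r^2/(2*\<bar>b\<bar>)) - {c}"
proof -
  have "c \<notin> frame c \<theta> ` {u. Im u = b}" using assms(2) by (auto simp: frame_def b_def)
  hence "line_through P \<theta> - {c} = frame c \<theta> ` {u. Im u = b}"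
    unfolding line_through_frame[of P \<theta> c] b_def by blast
  hence "inverse_set c r (line_through P \<theta>) = frame c \<theta> ` inversion 0 r ` {u. Im u = b}"
    by (simp add: inverse_set_def image_image inversion_frame)
  also have "\<dots> = frame c \<theta> ` sphere (\<i> * of_real (r^2/(2*b))) (r^2/(2*\<bar>b\<bar>)) - {frame c \<theta> 0}"
    using assms bij_frame by (simp add: inversion_image_horizontal_line image_set_diff bij_is_inj)
  also have "\<dots> = sphere (frame c \<theta> (\<i> * of_real (r^2/(2*b)))) (r^2/(2*\<bar>b\<bar>)) - {frame c \<theta> 0}"
    by (simp only: frame_image_sphere)
  finally show ?thesis by (simp add: frame_def)
qed

lemma heading_continuous_on:
  fixes f :: "real \<Rightarrow> real"
  assumes "R > 0" "\<forall>s\<in>S. \<forall>t\<in>S. \<bar>f s - f t\<bar> \<le> \<bar>s - t\<bar> / R"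
  shows "continuous_on S f"
proof -
  have "(1/R)-lipschitz_on S f"
    using assms by (auto intro!: lipschitz_onI simp: dist_real_def field_simps)
  thus ?thesis using lipschitz_on_continuous_on by blast
qed

lemma dubins_path_integral:
  assumes "R > 0" "0 \<le> L" "\<forall>s\<in>{0..L}. \<forall>t\<in>{0..L}. \<bar>\<beta> s - \<beta> t\<bar> \<le> \<bar>s - t\<bar> / R"
  shows "dubins_path R L (\<lambda>t. x0 + integral {0..t} (\<lambda>u. cis (\<beta> u))) \<beta>"
  unfolding dubins_path_def
proof (intro conjI ballI)
  fix t assume t: "t \<in> {0..L}"
  have "continuous_on {0..L} (\<lambda>u. cis (\<beta> u))"
    unfolding cis_conv_exp by (intro continuous_intros heading_continuous_on[OF assms(1,3)])
  from integral_has_vector_derivative[OF this t]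
  show "((\<lambda>t. x0 + integral {0..t} (\<lambda>u. cis (\<beta> u))) has_vector_derivative cis (\<beta> t)) (at t within {0..L})"
    by (auto intro!: derivative_eq_intros)
qed (use assms in auto)

lemma dubins_path_displacement:
  assumes "dubins_path R L p \<alpha>" "0 \<le> a" "a \<le> b" "b \<le> L"
    and G: "\<And>t. t \<in> {a..b} \<Longrightarrow> (G has_vector_derivative cis (\<alpha> t)) (at t within {a..b})"
  shows "p b - p a = G b - G a"
proof -
  have "(p has_vector_derivative cis (\<alpha> t)) (at t within {a..b})" if "t \<in> {a..b}" for t
  proof (rule has_vector_derivative_within_subset)
    show "(p has_vector_derivative cis (\<alpha> t)) (at t within {0..L})"
      using assms(1-4) that unfolding dubins_path_def by auto
  qed (use assms in auto)
  from fundamental_theorem_of_calculus[OF assms(3) this] fundamental_theorem_of_calculus[OF assms(3) G]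
  show ?thesis by (rule has_integral_unique)
qed

text \<open>Centre of the circle of radius \<open>R\<close> on which a vehicle at \<open>P\<close> with heading \<open>\<theta>\<close>
turns left (\<open>s = 1\<close>) or right (\<open>s = -1\<close>).\<close>

definition turn_centre :: "real \<Rightarrow> real \<Rightarrow> complex \<Rightarrow> real \<Rightarrow> complex" where
  "turn_centre R s P \<theta> = P + of_real (s * R) * \<i> * cis \<theta>"

lemma turn_centre_eq_iff: "turn_centre R s P \<theta> = turn_centre R s Q \<theta> \<longleftrightarrow> P = Q"
  by (simp add: turn_centre_def)

lemma dubins_arc_turn_centre:
  assumes "dubins_path R L p \<alpha>" "0 \<le> a" "a \<le> b" "b \<le> L" "s \<in> {-1,1}" "R \<noteq> 0"
    and arc: "\<And>t. t \<in> {a..b} \<Longrightarrow> \<alpha> t = \<alpha> a + s * (t - a) / R"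
  shows "turn_centre R s (p b) (\<alpha> b) = turn_centre R s (p a) (\<alpha> a)"
proof -
  define G where "G t = - (of_real (s * R) * \<i>) * cis (\<alpha> a + s * (t - a) / R)" for t
  have "(G has_vector_derivative cis (\<alpha> t)) (at t within {a..b})" if "t \<in> {a..b}" for t
    unfolding arc[OF that] G_def has_vector_derivative_def
    by (rule has_derivative_eq_rhs, (rule derivative_intros)+)
      (use assms(5,6) in \<open>auto intro!: ext simp: field_simps scaleR_conv_of_real\<close>)
  from dubins_path_displacement[OF assms(1-4) this] show ?thesis
    using arc[of b] assms(3) by (simp add: turn_centre_def G_def algebra_simps)
qed

lemma dubins_segment_end:
  assumes "dubins_path R L p \<alpha>" "0 \<le> a" "a \<le> b" "b \<le> L"
    and seg: "\<And>t. t \<in> {a..b} \<Longrightarrow> \<alpha> t = \<alpha> a"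
  shows "p b = p a + of_real (b - a) * cis (\<alpha> a)"
proof -
  have "((\<lambda>t. of_real (t - a) * cis (\<alpha> a)) has_vector_derivative cis (\<alpha> t)) (at t within {a..b})"
    if "t \<in> {a..b}" for t
    unfolding seg[OF that] by (auto intro!: derivative_eq_intros)
  from dubins_path_displacement[OF assms(1-4) this] show ?thesis by (simp add: algebra_simps)
qed

lemma CSCSC_turn_centres:
  assumes dp: "dubins_path R L p \<alpha>" and R: "R \<noteq> 0" and s: "s1 \<in> {-1,1}" "s3 \<in> {-1,1}" "s5 \<in> {-1,1}"
    and le: "0 \<le> E1" "E1 \<le> E2" "E2 \<le> E3" "E3 \<le> E4" "E4 \<le> L"
    and arc1: "\<And>t. t \<in> {0..E1} \<Longrightarrow> \<alpha> t = \<alpha> 0 + s1 * t / R"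
    and seg2: "\<And>t. t \<in> {E1..E2} \<Longrightarrow> \<alpha> t = \<alpha> E1"
    and arc3: "\<And>t. t \<in> {E2..E3} \<Longrightarrow> \<alpha> t = \<alpha> E2 + s3 * (t - E2) / R"
    and seg4: "\<And>t. t \<in> {E3..E4} \<Longrightarrow> \<alpha> t = \<alpha> E3"
    and arc5: "\<And>t. t \<in> {E4..L} \<Longrightarrow> \<alpha> t = \<alpha> E4 + s5 * (t - E4) / R"
  defines "O3 \<equiv> turn_centre R s3 (p E2) (\<alpha> E1)"
  shows "p E2 = p E1 + of_real (E2 - E1) * cis (\<alpha> E1)"
    and "O3 - turn_centre R s1 (p 0) (\<alpha> 0) = (of_real (E2 - E1) + \<i> * of_real ((s3 - s1) * R)) * cis (\<alpha> E1)"
    and "\<And>t. t \<in> {E2..E3} \<Longrightarrow> turn_centre R s3 (p t) (\<alpha> t) = O3"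
    and "turn_centre R s5 (p L) (\<alpha> L) - O3 = (of_real (E4 - E3) + \<i> * of_real ((s5 - s3) * R)) * cis (\<alpha> E3)"
proof -
  have \<alpha>E2: "\<alpha> E2 = \<alpha> E1" using seg2[of E2] le by simp
  have \<alpha>E4: "\<alpha> E4 = \<alpha> E3" using seg4[of E4] le by simp
  have c1: "turn_centre R s1 (p E1) (\<alpha> E1) = turn_centre R s1 (p 0) (\<alpha> 0)"
  proof (rule dubins_arc_turn_centre[OF dp order_refl le(1) _ s(1) R])
    show "E1 \<le> L" using le by linarith
    show "\<alpha> t = \<alpha> 0 + s1 * (t - 0) / R" if "t \<in> {0..E1}" for t using arc1[OF that] by simp
  qed
  show s2: "p E2 = p E1 + of_real (E2 - E1) * cis (\<alpha> E1)"
    by (rule dubins_segment_end[OF dp le(1,2) _ seg2]) (use le in linarith)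
  show c3: "turn_centre R s3 (p t) (\<alpha> t) = O3" if t: "t \<in> {E2..E3}" for t
  proof -
    have "turn_centre R s3 (p t) (\<alpha> t) = turn_centre R s3 (p E2) (\<alpha> E2)"
      by (rule dubins_arc_turn_centre[OF dp _ _ _ s(2) R]) (use t le in \<open>auto intro: arc3\<close>)
    thus ?thesis by (simp add: O3_def \<alpha>E2)
  qed
  have c5: "turn_centre R s5 (p L) (\<alpha> L) = turn_centre R s5 (p E4) (\<alpha> E4)"
    by (rule dubins_arc_turn_centre[OF dp _ le(5) order_refl s(3) R arc5]) (use le in linarith)
  have s4: "p E4 = p E3 + of_real (E4 - E3) * cis (\<alpha> E3)"
    by (rule dubins_segment_end[OF dp _ le(4) le(5) seg4]) (use le in linarith)
  have "O3 - turn_centre R s1 (p 0) (\<alpha> 0) = turn_centre R s3 (p E2) (\<alpha> E1) - turn_centre R s1 (p E1) (\<alpha> E1)"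
    by (simp add: O3_def c1)
  also have "\<dots> = (of_real (E2 - E1) + \<i> * of_real ((s3 - s1) * R)) * cis (\<alpha> E1)"
    by (simp add: s2 turn_centre_def algebra_simps)
  finally show "O3 - turn_centre R s1 (p 0) (\<alpha> 0) = (of_real (E2 - E1) + \<i> * of_real ((s3 - s1) * R)) * cis (\<alpha> E1)" .
  have "turn_centre R s5 (p L) (\<alpha> L) - O3 = turn_centre R s5 (p E4) (\<alpha> E3) - turn_centre R s3 (p E3) (\<alpha> E3)"
    using c5 c3[of E3] le by (simp add: \<alpha>E4)
  also have "\<dots> = (of_real (E4 - E3) + \<i> * of_real ((s5 - s3) * R)) * cis (\<alpha> E3)"
    by (simp add: s4 turn_centre_def algebra_simps)
  finally show "turn_centre R s5 (p L) (\<alpha> L) - O3 = (of_real (E4 - E3) + \<i> * of_real ((s5 - s3) * R)) * cis (\<alpha> E3)" .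
qed

text \<open>\<open>turn_time (t - E) T\<close> is the time spent up to \<open>t\<close> in a turn of duration \<open>T\<close> starting at \<open>E\<close>.\<close>

definition turn_time :: "real \<Rightarrow> real \<Rightarrow> real" where
  "turn_time x m = max 0 (min x m)"

definition CSCSC_heading ::
  "real \<Rightarrow> real \<Rightarrow> real \<Rightarrow> real \<Rightarrow> real \<Rightarrow> real \<Rightarrow> real \<Rightarrow> real \<Rightarrow> real \<Rightarrow> real \<Rightarrow> real \<Rightarrow> real" where
  "CSCSC_heading R a0 s1 s3 s5 T1 E2 T3 E4 T5 t =
     a0 + (s1 * turn_time t T1 + s3 * turn_time (t - E2) T3 + s5 * turn_time (t - E4) T5) / R"

lemma CSCSC_heading_lipschitz:
  fixes a0 :: real
  assumes "R > 0" "s1 \<in> {-1,1}" "s3 \<in> {-1,1}" "s5 \<in> {-1,1}"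
    "0 \<le> T1" "T1 \<le> E2" "0 \<le> T3" "E2 + T3 \<le> E4" "0 \<le> T5"
  defines "H \<equiv> CSCSC_heading R a0 s1 s3 s5 T1 E2 T3 E4 T5"
  shows "\<bar>H s - H t\<bar> \<le> \<bar>s - t\<bar> / R"
proof -
  have ordered: "\<bar>H s - H t\<bar> \<le> (t - s) / R" if "s \<le> t" for s t
  proof -
    define d1 where "d1 = turn_time t T1 - turn_time s T1"
    define d3 where "d3 = turn_time (t - E2) T3 - turn_time (s - E2) T3"
    define d5 where "d5 = turn_time (t - E4) T5 - turn_time (s - E4) T5"
    have "0 \<le> d1" "0 \<le> d3" "0 \<le> d5"
      using assms that unfolding d1_def d3_def d5_def turn_time_def by auto
    moreover have "d1 + d3 + d5 \<le> t - s"
      using assms that unfolding d1_def d3_def d5_def turn_time_def max_def min_def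
      by (simp split: if_splits)
    moreover have "H t - H s = (s1 * d1 + s3 * d3 + s5 * d5) / R"
      using assms(1) unfolding H_def CSCSC_heading_def d1_def d3_def d5_def by (simp add: field_simps)
    hence "\<bar>H s - H t\<bar> = \<bar>s1 * d1 + s3 * d3 + s5 * d5\<bar> / R"
      using assms(1) by (metis abs_minus_commute abs_divide abs_of_pos)
    ultimately show ?thesis
      using assms(1-4) by (auto intro!: divide_right_mono)
  qed
  show ?thesis
  proof (cases "s \<le> t")
    case True
    thus ?thesis using ordered[OF True] by simp
  next
    case False
    thus ?thesis using ordered[of t s] by (simp add: abs_minus_commute)
  qed
qed

lemma CSCSC_heading_pieces:
  assumes "0 \<le> T1" "T1 \<le> E2" "0 \<le> T3" "E2 + T3 \<le> E4" "0 \<le> T5"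
    and "H = CSCSC_heading R a0 s1 s3 s5 T1 E2 T3 E4 T5"
  shows "H 0 = a0"
    and "t \<in> {0..T1} \<Longrightarrow> H t = H 0 + s1 * t / R"
    and "t \<in> {T1..E2} \<Longrightarrow> H t = H T1"
    and "t \<in> {E2..E2 + T3} \<Longrightarrow> H t = H E2 + s3 * (t - E2) / R"
    and "t \<in> {E2 + T3..E4} \<Longrightarrow> H t = H (E2 + T3)"
    and "t \<in> {E4..E4 + T5} \<Longrightarrow> H t = H E4 + s5 * (t - E4) / R"
  using assms by (auto simp: CSCSC_heading_def turn_time_def add_divide_distrib)

lemma CSCSC_path_exists:
  assumes R: "R > 0" and s: "s1 \<in> {-1,1}" "s3 \<in> {-1,1}" "s5 \<in> {-1,1}"
    and nn: "0 \<le> T1" "0 \<le> l2" "0 \<le> \<mu>" "\<mu> \<le> T3" "0 \<le> l4" "0 \<le> T5"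
    and \<beta>: "\<beta>2 = a0 + s1 * T1 / R" "\<beta>4 = \<beta>2 + s3 * T3 / R" "\<gamma> = \<beta>2 + s3 * \<mu> / R"
    and tangent2: "O3 - turn_centre R s1 xi a0 = (of_real l2 + \<i> * of_real ((s3 - s1) * R)) * cis \<beta>2"
    and tangent4: "turn_centre R s5 xf (\<beta>4 + s5 * T5 / R) - O3 = (of_real l4 + \<i> * of_real ((s5 - s3) * R)) * cis \<beta>4"
    and through: "turn_centre R s3 xm \<gamma> = O3"
    and final: "cis (\<beta>4 + s5 * T5 / R) = cis af"
  shows "\<exists>P \<beta>. three_point_feasible R xi a0 xm xf af (T1 + l2 + T3 + l4 + T5) P \<beta>"
proof -
  define E2 where "E2 = T1 + l2"
  define E4 where "E4 = E2 + T3 + l4"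
  define Lp where "Lp = E4 + T5"
  define H where "H = CSCSC_heading R a0 s1 s3 s5 T1 E2 T3 E4 T5"
  define P where "P t = xi + integral {0..t} (\<lambda>u. cis (H u))" for t
  have le: "0 \<le> T1" "T1 \<le> E2" "E2 \<le> E2 + T3" "E2 + T3 \<le> E4" "E4 \<le> Lp" "0 \<le> T3"
    using nn unfolding E2_def E4_def Lp_def by auto
  note H_pieces = CSCSC_heading_pieces[OF le(1,2,6,4) nn(6) H_def]
  have H_values: "H 0 = a0" "H T1 = \<beta>2" "H (E2 + \<mu>) = \<gamma>" "H (E2 + T3) = \<beta>4" "H Lp = \<beta>4 + s5 * T5 / R"
    using H_pieces(1) H_pieces(2)[of T1] H_pieces(3)[of E2] H_pieces(4)[of "E2 + \<mu>"]
      H_pieces(4)[of "E2 + T3"] H_pieces(5)[of E4] H_pieces(6)[of "E4 + T5"] le nn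
    unfolding \<beta> Lp_def by simp_all
  have "\<forall>s\<in>{0..Lp}. \<forall>t\<in>{0..Lp}. \<bar>H s - H t\<bar> \<le> \<bar>s - t\<bar> / R"
    unfolding H_def using CSCSC_heading_lipschitz[OF R s] le nn by auto
  hence dp: "dubins_path R Lp P H"
    unfolding P_def using dubins_path_integral[OF R] le by auto
  have P0: "P 0 = xi" unfolding P_def by simp
  note centres = CSCSC_turn_centres[OF dp _ s le(1-5) H_pieces(2-5) H_pieces(6)[folded Lp_def]]
  have "turn_centre R s3 (P E2) \<beta>2 - turn_centre R s1 xi a0 = O3 - turn_centre R s1 xi a0"
    using centres(2) tangent2 R by (simp add: H_values P0 E2_def)
  hence O3: "turn_centre R s3 (P E2) \<beta>2 = O3" by simp
  have "turn_centre R s3 (P (E2 + \<mu>)) \<gamma> = turn_centre R s3 xm \<gamma>"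
    using centres(3)[of "E2 + \<mu>"] nn R O3 through by (simp add: H_values)
  hence "P (E2 + \<mu>) = xm" by (simp only: turn_centre_eq_iff)
  moreover have "turn_centre R s5 (P Lp) (H Lp) - O3 = turn_centre R s5 xf (H Lp) - O3"
    using centres(4) tangent4 R O3 by (simp add: H_values E4_def)
  hence "turn_centre R s5 (P Lp) (H Lp) = turn_centre R s5 xf (H Lp)" by simp
  hence "P Lp = xf" by (simp only: turn_centre_eq_iff)
  ultimately have "three_point_feasible R xi a0 xm xf af Lp P H"
    unfolding three_point_feasible_def using dp P0 H_values final le nn by auto
  moreover have "Lp = T1 + l2 + T3 + l4 + T5" unfolding Lp_def E4_def E2_def by simp
  ultimately show ?thesis by blast
qed

lemma cis_arctan_Im_over_Re:
  assumes "cmod z = 1" "Re z > 0"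
  shows "cis (arctan (Im z / Re z)) = z"
proof -
  have "(Re z)^2 + (Im z)^2 = 1" using assms(1) by (simp add: cmod_def)
  hence "1 + (Im z / Re z)^2 = (1 / Re z)^2" using assms(2) by (simp add: field_simps power2_eq_square)
  hence "sqrt (1 + (Im z / Re z)^2) = 1 / Re z" using assms(2) by simp
  thus ?thesis using assms(2) by (simp add: cis.ctr cos_arctan sin_arctan complex_eq_iff)
qed

lemma Im_over_Re_divide:
  fixes a b :: complex
  shows "Im (a / b) / Re (a / b) = (Im a * Re b - Re a * Im b) / (Re a * Re b + Im a * Im b)"
proof (cases "b = 0")
  case False
  hence "(Re b)^2 + (Im b)^2 \<noteq> 0" by (simp add: complex_eq_iff sum_power2_eq_zero_iff)
  thus ?thesis by (simp add: Re_divide Im_divide)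
qed simp

text \<open>If a common tangent leaves a circle of radius \<open>R\<close> turning in direction \<open>s\<close> and joins a
circle turning in direction \<open>s'\<close>, the centres differ by \<open>D = (l + \<i>\<kappa>) cis \<theta>\<close>, where
\<open>\<kappa> = (s' - s) R\<close>, \<open>l\<close> is the length of the tangent and \<open>\<theta>\<close> its heading. The functions below
recover \<open>l\<close> and \<open>\<theta>\<close> from \<open>D\<close>, the heading measured relative to a reference direction \<open>w\<close>.\<close>

definition tangent_length :: "real \<Rightarrow> complex \<Rightarrow> real" where
  "tangent_length \<kappa> D = sqrt ((cmod D)^2 - \<kappa>^2)"

definition tangent_ratio :: "real \<Rightarrow> complex \<Rightarrow> complex \<Rightarrow> complex" where
  "tangent_ratio \<kappa> w D = D / ((of_real (tangent_length \<kappa> D) + \<i> * of_real \<kappa>) * w)"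

definition tangent_turn :: "real \<Rightarrow> complex \<Rightarrow> complex \<Rightarrow> real" where
  "tangent_turn \<kappa> w D = arctan (Im (tangent_ratio \<kappa> w D) / Re (tangent_ratio \<kappa> w D))"

lemma tangent_length_pos: "\<kappa>^2 < (cmod D)^2 \<Longrightarrow> 0 < tangent_length \<kappa> D"
  by (simp add: tangent_length_def)

lemma tangent_decomposition:
  assumes "\<kappa>^2 < (cmod D)^2" "cmod w = 1" "0 < Re (tangent_ratio \<kappa> w D)"
  shows "D = (of_real (tangent_length \<kappa> D) + \<i> * of_real \<kappa>) * (w * cis (tangent_turn \<kappa> w D))"
proof -
  define l where "l = tangent_length \<kappa> D"
  have l: "0 < l" "l^2 + \<kappa>^2 = (cmod D)^2"
    using assms(1) tangent_length_pos[OF assms(1)] by (simp_all add: l_def tangent_length_def)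
  hence nz0: "of_real l + \<i> * of_real \<kappa> \<noteq> 0" by (simp add: complex_eq_iff)
  hence nz: "(of_real l + \<i> * of_real \<kappa>) * w \<noteq> 0" using assms(2) by auto
  have "cmod D = cmod (of_real l + \<i> * of_real \<kappa>)" using l(2) by (simp add: cmod_def)
  hence "cmod (tangent_ratio \<kappa> w D) = 1"
    using nz0 assms(2) by (simp add: tangent_ratio_def l_def[symmetric] norm_divide norm_mult)
  hence "cis (tangent_turn \<kappa> w D) = tangent_ratio \<kappa> w D"
    unfolding tangent_turn_def using assms(3) by (rule cis_arctan_Im_over_Re)
  thus ?thesis using nz by (simp add: tangent_ratio_def l_def[symmetric] mult.assoc[symmetric])
qed

lemma tangent_at_reference:
  fixes \<kappa> :: real
  assumes "0 < l" "cmod w = 1"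
  defines "D \<equiv> (of_real l + \<i> * of_real \<kappa>) * w"
  shows "tangent_length \<kappa> D = l" "tangent_ratio \<kappa> w D = 1" "tangent_turn \<kappa> w D = 0"
proof -
  have "cmod D = cmod (of_real l + \<i> * of_real \<kappa>)" using assms(2) by (simp add: D_def norm_mult)
  hence "(cmod D)^2 = l^2 + \<kappa>^2" by (simp add: cmod_power2)
  thus l: "tangent_length \<kappa> D = l" using assms(1) by (simp add: tangent_length_def)
  have "of_real l + \<i> * of_real \<kappa> \<noteq> 0" using assms(1) by (simp add: complex_eq_iff)
  hence "D \<noteq> 0" using assms(2) by (auto simp: D_def)
  thus "tangent_ratio \<kappa> w D = 1" by (simp add: tangent_ratio_def l D_def[symmetric])
  thus "tangent_turn \<kappa> w D = 0" by (simp add: tangent_turn_def)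
qed

lemma tangent_continuous:
  assumes "isCont D 0" "D 0 = (of_real l + \<i> * of_real \<kappa>) * w" "0 < l" "cmod w = 1"
  shows "isCont (\<lambda>e. tangent_length \<kappa> (D e)) 0" "isCont (\<lambda>e. tangent_ratio \<kappa> w (D e)) 0"
    "isCont (\<lambda>e. tangent_turn \<kappa> w (D e)) 0"
proof -
  note at0 = tangent_at_reference[OF assms(3,4), of \<kappa>, folded assms(2)]
  show len: "isCont (\<lambda>e. tangent_length \<kappa> (D e)) 0"
    unfolding tangent_length_def by (intro continuous_intros assms(1))
  have "of_real (tangent_length \<kappa> (D 0)) + \<i> * of_real \<kappa> \<noteq> 0"
    using assms(3) by (simp add: at0 complex_eq_iff)
  hence "(of_real (tangent_length \<kappa> (D 0)) + \<i> * of_real \<kappa>) * w \<noteq> 0"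
    using assms(4) by auto
  thus ratio: "isCont (\<lambda>e. tangent_ratio \<kappa> w (D e)) 0"
    unfolding tangent_ratio_def by (intro continuous_intros assms(1) len)
  show "isCont (\<lambda>e. tangent_turn \<kappa> w (D e)) 0"
    unfolding tangent_turn_def by (intro continuous_intros isCont_Re isCont_Im ratio) (simp add: at0)
qed

lemma arctan_divide_has_real_derivative:
  assumes "(N has_real_derivative N') (at x)" "(M has_real_derivative M') (at x)" "N x = 0" "M x \<noteq> 0"
  shows "((\<lambda>e. arctan (N e / M e)) has_real_derivative N' / M x) (at x)"
  by (rule DERIV_cong[OF DERIV_chain2[OF DERIV_arctan DERIV_divide[OF assms(1,2)]]])
    (use assms(3,4) in \<open>auto simp: field_simps\<close>)

lemma tangent_coordinates_deriv:
  fixes x y :: "real \<Rightarrow> real" and \<kappa> x' y' :: real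
  assumes dx: "(x has_real_derivative x') (at 0)" and dy: "(y has_real_derivative y') (at 0)"
    and pos: "(x 0)^2 + (y 0)^2 - \<kappa>^2 > 0"
  defines "l \<equiv> \<lambda>e. sqrt ((x e)^2 + (y e)^2 - \<kappa>^2)"
  defines "U \<equiv> \<lambda>e. x e * l e + y e * \<kappa>"
  defines "V \<equiv> \<lambda>e. y e * l e - x e * \<kappa>"
  defines "c \<equiv> U 0 / ((x 0)^2 + (y 0)^2)"
  defines "s \<equiv> V 0 / ((x 0)^2 + (y 0)^2)"
  shows "((\<lambda>e. l e - \<kappa> * arctan ((V e * c - U e * s) / (U e * c + V e * s)))
           has_real_derivative (c * x' + s * y')) (at 0)"
proof -
  define n0 where "n0 = (x 0)^2 + (y 0)^2"
  define l0 where "l0 = l 0"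
  have l0p: "l0 > 0" using pos unfolding l0_def l_def by simp
  have l0sq: "l0^2 = n0 - \<kappa>^2" using pos unfolding l0_def l_def n0_def by simp
  have n0p: "n0 > 0" using l0sq l0p by (smt (verit) zero_less_power2 zero_le_power2)
  define lp where "lp = (x 0 * x' + y 0 * y') / l0"
  have dg: "((\<lambda>e. (x e)^2 + (y e)^2 - \<kappa>^2) has_real_derivative (2*x 0*x' + 2*y 0*y')) (at 0)"
    by (auto intro!: derivative_eq_intros dx dy)
  have dl: "(l has_real_derivative lp) (at 0)"
    unfolding l_def
    by (rule DERIV_cong[OF DERIV_chain2[OF DERIV_real_sqrt dg]])
      (use pos l0p in \<open>auto simp: lp_def l0_def l_def field_simps\<close>)
  define U' where "U' = x' * l0 + x 0 * lp + y' * \<kappa>"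
  define V' where "V' = y' * l0 + y 0 * lp - x' * \<kappa>"
  have dU: "(U has_real_derivative U') (at 0)" unfolding U_def U'_def l0_def
    by (auto intro!: derivative_eq_intros dx dy dl)
  have dV: "(V has_real_derivative V') (at 0)" unfolding V_def V'_def l0_def
    by (auto intro!: derivative_eq_intros dx dy dl)
  have "(U 0)^2 + (V 0)^2 = ((x 0)^2 + (y 0)^2) * (l0^2 + \<kappa>^2)"
    unfolding U_def V_def l0_def by (simp add: power2_eq_square algebra_simps)
  hence UV: "(U 0)^2 + (V 0)^2 = n0 * n0" using l0sq n0_def by simp
  define N where "N e = V e * c - U e * s" for e
  define M where "M e = U e * c + V e * s" for e
  have cn: "c = U 0 / n0" "s = V 0 / n0" unfolding c_def s_def n0_def by simp_all
  have N0: "N 0 = 0" unfolding N_def cn by (simp add: field_simps)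
  have M0: "M 0 = n0" unfolding M_def cn using UV n0p by (simp add: field_simps power2_eq_square)
  define N' where "N' = V' * c - U' * s"
  have dN: "(N has_real_derivative N') (at 0)" unfolding N_def[abs_def] N'_def
    by (auto intro!: derivative_eq_intros dU dV)
  have dM: "(M has_real_derivative U' * c + V' * s) (at 0)" unfolding M_def[abs_def]
    by (auto intro!: derivative_eq_intros dU dV)
  from arctan_divide_has_real_derivative[OF dN dM N0] M0 n0p
  have "((\<lambda>e. arctan (N e / M e)) has_real_derivative N' / n0) (at 0)" by simp
  hence "((\<lambda>e. l e - \<kappa> * arctan (N e / M e)) has_real_derivative lp - \<kappa> * (N' / n0)) (at 0)"
    by (intro DERIV_diff DERIV_cmult dl)
  moreover have "lp - \<kappa> * (N' / n0) = c * x' + s * y'"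
  proof -
    have "lp - \<kappa> * (N' / n0) - (c * x' + s * y') = 0"
      unfolding lp_def N'_def U'_def V'_def cn U_def V_def l0_def[symmetric] using l0p n0p
      apply (simp add: field_simps)
      using l0sq n0_def by algebra
    thus ?thesis by simp
  qed
  ultimately show ?thesis unfolding N_def M_def by simp
qed

lemma tangent_length_turn_deriv:
  assumes dD: "(D has_vector_derivative D') (at 0)"
    and D0: "D 0 = (of_real l + \<i> * of_real \<kappa>) * w" and l: "0 < l" and w: "cmod w = 1"
  shows "((\<lambda>e. tangent_length \<kappa> (D e) - \<kappa> * tangent_turn \<kappa> w (D e))
           has_real_derivative Re (cnj w * D')) (at 0)"
proof -
  note at0 = tangent_at_reference[OF l w, of \<kappa>, folded D0]
  define x where "x e = Re (D e)" for e
  define y where "y e = Im (D e)" for e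
  have dx: "(x has_real_derivative Re D') (at 0)" unfolding x_def[abs_def] by (rule has_field_derivative_Re[OF dD])
  have dy: "(y has_real_derivative Im D') (at 0)" unfolding y_def[abs_def] by (rule has_field_derivative_Im[OF dD])
  have cm: "(cmod (D e))^2 = (x e)^2 + (y e)^2" for e by (simp add: x_def y_def cmod_power2)
  define lc where "lc e = sqrt ((x e)^2 + (y e)^2 - \<kappa>^2)" for e
  define U where "U e = x e * lc e + y e * \<kappa>" for e
  define V where "V e = y e * lc e - x e * \<kappa>" for e
  define c where "c = U 0 / ((x 0)^2 + (y 0)^2)"
  define s where "s = V 0 / ((x 0)^2 + (y 0)^2)"
  have len: "tangent_length \<kappa> (D e) = lc e" for e by (simp add: tangent_length_def lc_def cm)
  have "0 < lc 0" using at0(1) l len[of 0] by simp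
  hence pos: "(x 0)^2 + (y 0)^2 - \<kappa>^2 > 0" by (simp add: lc_def)
  hence n0: "(lc 0)^2 + \<kappa>^2 = (x 0)^2 + (y 0)^2" by (simp add: lc_def)
  have "of_real l + \<i> * of_real \<kappa> \<noteq> 0" using l by (simp add: complex_eq_iff)
  hence "w = D 0 / (of_real (lc 0) + \<i> * of_real \<kappa>)"
    using at0(1) len[of 0] D0 by simp
  hence w_coords: "Re w = c" "Im w = s"
    unfolding c_def s_def U_def V_def using n0
    by (simp_all add: Re_divide Im_divide x_def y_def algebra_simps)
  have "Im (tangent_ratio \<kappa> w (D e)) / Re (tangent_ratio \<kappa> w (D e))
          = (V e * c - U e * s) / (U e * c + V e * s)" for e
    unfolding tangent_ratio_def Im_over_Re_divide len using w_coords
    by (simp add: U_def V_def x_def y_def algebra_simps)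
  moreover have "Re (cnj w * D') = c * Re D' + s * Im D'" using w_coords by simp
  ultimately show ?thesis
    using tangent_coordinates_deriv[OF dx dy pos]
    unfolding tangent_turn_def len lc_def[symmetric] U_def[symmetric] V_def[symmetric]
      c_def[symmetric] s_def[symmetric] by simp
qed

lemma sign_shift:
  fixes s R x d :: real
  shows "s \<in> {-1,1} \<Longrightarrow> R \<noteq> 0 \<Longrightarrow> s * (x + s * R * d) / R = s * x / R + d"
  by (auto simp: field_simps)

lemma Im_cnj_cis_mult:
  "Im (cnj (cis \<theta>) * (z + (of_real a + \<i> * of_real b) * cis \<theta>)) = Im (cnj (cis \<theta>) * z) + b"
proof -
  have one: "cnj (cis \<theta>) * cis \<theta> = 1" by (simp add: cis_cnj cis_mult)
  have "cnj (cis \<theta>) * ((of_real a + \<i> * of_real b) * cis \<theta>) = of_real a + \<i> * of_real b"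
    by (metis one mult.left_commute mult.right_neutral)
  thus ?thesis by (simp only: distrib_left) simp
qed

lemma Im_cnj_eq_normD:
  assumes "cmod w = 1" "cmod z = \<bar>c\<bar>" "Im (cnj w * z) = c"
  shows "z = \<i> * of_real c * w"
proof -
  define u where "u = cnj w * z"
  have "cmod u = \<bar>c\<bar>" using assms(1,2) by (simp add: u_def norm_mult)
  hence "(Re u)^2 + c^2 = c^2" using assms(3) cmod_power2[of u] by (simp add: u_def)
  hence "u = \<i> * of_real c" using assms(3) by (simp add: u_def complex_eq_iff)
  moreover have "w * u = z" using assms(1) by (simp add: u_def mult.assoc[symmetric] complex_norm_square[symmetric])
  ultimately show ?thesis by (simp add: mult.commute)
qed

locale optimal_CSCSC =
  fixes R ai af L :: real and xi xm xf :: complex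
    and p :: "real \<Rightarrow> complex" and \<alpha> :: "real \<Rightarrow> real"
    and t1 t2 t3 t4 tm s1 s3 s5 :: real
  assumes R_pos: "0 < R"
    and optimal: "three_point_optimal R xi ai xm xf af L p \<alpha>"
    and times: "0 < t1" "t1 < t2" "t2 < tm" "tm < t3" "t3 < t4" "t4 < L"
    and signs: "s1 \<in> {-1,1}" "s3 \<in> {-1,1}" "s5 \<in> {-1,1}"
    and arc1: "\<And>t. t \<in> {0..t1} \<Longrightarrow> \<alpha> t = \<alpha> 0 + s1 * t / R"
    and seg2: "\<And>t. t \<in> {t1..t2} \<Longrightarrow> \<alpha> t = \<alpha> t1"
    and arc3: "\<And>t. t \<in> {t2..t3} \<Longrightarrow> \<alpha> t = \<alpha> t2 + s3 * (t - t2) / R"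
    and seg4: "\<And>t. t \<in> {t3..t4} \<Longrightarrow> \<alpha> t = \<alpha> t3"
    and arc5: "\<And>t. t \<in> {t4..L} \<Longrightarrow> \<alpha> t = \<alpha> t4 + s5 * (t - t4) / R"
    and through_xm: "p tm = xm"
begin

definition "\<beta>2 = \<alpha> t1"
definition "\<beta>4 = \<alpha> t3"
definition "O1 = turn_centre R s1 xi ai"
definition "O3 = turn_centre R s3 (p t2) \<beta>2"
definition "O5 = turn_centre R s5 xf (\<alpha> L)"
definition "A = O3 - xm"
definition "k2 = (s3 - s1) * R"
definition "k4 = (s5 - s3) * R"

lemma R_ne_0: "R \<noteq> 0"
  using R_pos by simp

lemma feasible: "dubins_path R L p \<alpha>" "p 0 = xi" "\<alpha> 0 = ai" "p L = xf" "cis (\<alpha> L) = cis af"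
  using optimal unfolding three_point_optimal_def three_point_feasible_def by auto

lemma headings:
  "\<beta>2 = ai + s1 * t1 / R" "\<alpha> t2 = \<beta>2" "\<beta>4 = \<beta>2 + s3 * (t3 - t2) / R" "\<alpha> t4 = \<beta>4"
  "\<alpha> L = \<beta>4 + s5 * (L - t4) / R"
  using arc1[of t1] seg2[of t2] arc3[of t3] seg4[of t4] arc5[of L] times feasible(3)
  by (auto simp: \<beta>2_def \<beta>4_def)

lemma centre_relations:
  "O3 - O1 = (of_real (t2 - t1) + \<i> * of_real k2) * cis \<beta>2"
  "O5 - O3 = (of_real (t4 - t3) + \<i> * of_real k4) * cis \<beta>4"
  "turn_centre R s3 xm (\<beta>2 + s3 * (tm - t2) / R) = O3"
  "turn_centre R s3 (p t3) \<beta>4 = O3"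
  "p t1 = O3 - of_real (t2 - t1) * cis \<beta>2 - of_real (s3 * R) * \<i> * cis \<beta>2"
proof -
  have le: "0 \<le> t1" "t1 \<le> t2" "t2 \<le> t3" "t3 \<le> t4" "t4 \<le> L" using times by linarith+
  note centres = CSCSC_turn_centres[OF feasible(1) R_ne_0 signs le arc1 seg2 arc3 seg4 arc5,
      folded \<beta>2_def \<beta>4_def, folded O3_def]
  show "O3 - O1 = (of_real (t2 - t1) + \<i> * of_real k2) * cis \<beta>2"
    using centres(2) by (simp add: O1_def k2_def feasible(2,3))
  show "O5 - O3 = (of_real (t4 - t3) + \<i> * of_real k4) * cis \<beta>4"
    using centres(4) by (simp add: O5_def k4_def feasible(4))
  show "turn_centre R s3 xm (\<beta>2 + s3 * (tm - t2) / R) = O3"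
    using centres(3)[of tm] arc3[of tm] times by (simp add: through_xm headings(2))
  show "turn_centre R s3 (p t3) \<beta>4 = O3"
    using centres(3)[of t3] le by (simp add: \<beta>4_def)
  show "p t1 = O3 - of_real (t2 - t1) * cis \<beta>2 - of_real (s3 * R) * \<i> * cis \<beta>2"
    using centres(1) by (simp add: O3_def turn_centre_def)
qed

lemma A_eq: "A = of_real (s3 * R) * \<i> * cis (\<beta>2 + s3 * (tm - t2) / R)"
  unfolding A_def centre_relations(3)[symmetric] by (simp add: turn_centre_def)

lemma norm_A: "cmod A = R"
  using signs(2) R_pos by (auto simp: A_eq norm_mult)

lemma optimal_length_le:
  assumes nn: "0 \<le> T1" "0 \<le> l2" "0 \<le> \<mu>" "\<mu> \<le> T3" "0 \<le> l4" "0 \<le> T5"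
    and \<beta>: "\<beta>2' = ai + s1 * T1 / R" "\<beta>4' = \<beta>2' + s3 * T3 / R" "\<gamma> = \<beta>2' + s3 * \<mu> / R"
    and tangent2: "O3' - O1 = (of_real l2 + \<i> * of_real k2) * cis \<beta>2'"
    and tangent4: "O5 - O3' = (of_real l4 + \<i> * of_real k4) * cis \<beta>4'"
    and through: "turn_centre R s3 xm \<gamma> = O3'"
    and final: "cis (\<beta>4' + s5 * T5 / R) = cis (\<alpha> L)"
  shows "L \<le> T1 + l2 + T3 + l4 + T5"
proof -
  have "turn_centre R s5 xf (\<beta>4' + s5 * T5 / R) = O5"
    using final by (simp add: O5_def turn_centre_def)
  then obtain P \<beta> where "three_point_feasible R xi ai xm xf af (T1 + l2 + T3 + l4 + T5) P \<beta>"
    using CSCSC_path_exists[OF R_pos signs nn \<beta>, of O3' xi xf xm af] tangent2 tangent4 through final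
      feasible(5) by (auto simp: O1_def k2_def k4_def)
  thus ?thesis using optimal unfolding three_point_optimal_def by blast
qed

text \<open>Rotating the circle of \<open>C\<^sub>3\<close> about \<open>x\<^sub>m\<close> by the angle \<open>e\<close> moves its centre to \<open>x\<^sub>m + cis e * A\<close>;
with the re-drawn tangents the path length becomes \<open>L - (t2 - t1) - (t4 - t3) + variation e\<close>.\<close>

definition "D2 e = xm - O1 + cis e * A"
definition "D4 e = O5 - xm - cis e * A"
definition "turn2 e = tangent_turn k2 (cis \<beta>2) (D2 e)"
definition "turn4 e = tangent_turn k4 (cis \<beta>4) (D4 e)"
definition "variation e = tangent_length k2 (D2 e) - k2 * turn2 e + (tangent_length k4 (D4 e) - k4 * turn4 e)"

lemma D_at_0:
  "D2 0 = (of_real (t2 - t1) + \<i> * of_real k2) * cis \<beta>2"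
  "D4 0 = (of_real (t4 - t3) + \<i> * of_real k4) * cis \<beta>4"
  using centre_relations(1,2) by (simp_all add: D2_def D4_def A_def algebra_simps)

lemmas tangent2_at_0 = tangent_at_reference[of "t2 - t1" "cis \<beta>2" k2, folded D_at_0(1)]
lemmas tangent4_at_0 = tangent_at_reference[of "t4 - t3" "cis \<beta>4" k4, folded D_at_0(2)]

lemma variation_0: "variation 0 = (t2 - t1) + (t4 - t3)"
  using tangent2_at_0 tangent4_at_0 times by (simp add: variation_def turn2_def turn4_def)

lemma variation_ge:
  assumes "k2^2 < (cmod (D2 e))^2" "k4^2 < (cmod (D4 e))^2"
    and "0 < Re (tangent_ratio k2 (cis \<beta>2) (D2 e))" "0 < Re (tangent_ratio k4 (cis \<beta>4) (D4 e))"
    and "0 < t1 + s1 * R * turn2 e" "0 < tm - t2 + s3 * R * (e - turn2 e)"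
    and "0 < t3 - tm + s3 * R * (turn4 e - e)" "0 < L - t4 - s5 * R * turn4 e"
  shows "variation 0 \<le> variation e"
proof -
  txt \<open>Arc durations of the perturbed path, and the time \<open>\<mu>\<close> it spends on \<open>C\<^sub>3\<close> before \<open>x\<^sub>m\<close>.\<close>
  define T1 where "T1 = t1 + s1 * R * turn2 e"
  define \<mu> where "\<mu> = tm - t2 + s3 * R * (e - turn2 e)"
  define T3 where "T3 = t3 - t2 + s3 * R * (turn4 e - turn2 e)"
  define T5 where "T5 = L - t4 + s5 * R * (- turn4 e)"
  have tangent2: "xm + cis e * A - O1 = (of_real (tangent_length k2 (D2 e)) + \<i> * of_real k2) * cis (\<beta>2 + turn2 e)"
    using tangent_decomposition[of k2 "D2 e" "cis \<beta>2"] assms(1,3)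
    by (simp add: turn2_def D2_def cis_mult algebra_simps)
  have tangent4: "O5 - (xm + cis e * A) = (of_real (tangent_length k4 (D4 e)) + \<i> * of_real k4) * cis (\<beta>4 + turn4 e)"
    using tangent_decomposition[of k4 "D4 e" "cis \<beta>4"] assms(2,4)
    by (simp add: turn4_def D4_def cis_mult algebra_simps)
  have through: "turn_centre R s3 xm (\<beta>2 + s3 * (tm - t2) / R + e) = xm + cis e * A"
    by (simp add: A_eq turn_centre_def cis_mult[symmetric] algebra_simps)
  have "L \<le> T1 + tangent_length k2 (D2 e) + T3 + tangent_length k4 (D4 e) + T5"
  proof (rule optimal_length_le[OF _ _ _ _ _ _ _ _ _ tangent2 tangent4 through])
    show "\<beta>2 + turn2 e = ai + s1 * T1 / R" "\<beta>4 + turn4 e = \<beta>2 + turn2 e + s3 * T3 / R"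
      "\<beta>2 + s3 * (tm - t2) / R + e = \<beta>2 + turn2 e + s3 * \<mu> / R"
      "cis (\<beta>4 + turn4 e + s5 * T5 / R) = cis (\<alpha> L)"
      using sign_shift[OF signs(3) R_ne_0, of "L - t4" "- turn4 e"]
      by (simp_all add: T1_def T3_def T5_def \<mu>_def headings(1,3,5)
          sign_shift[OF signs(1) R_ne_0] sign_shift[OF signs(2) R_ne_0] add.assoc)
  qed (use assms less_imp_le[OF tangent_length_pos[OF assms(1)]] less_imp_le[OF tangent_length_pos[OF assms(2)]]
      in \<open>auto simp: T1_def T3_def T5_def \<mu>_def algebra_simps\<close>)
  thus ?thesis
    unfolding variation_0 by (simp add: variation_def T1_def T3_def T5_def k2_def k4_def algebra_simps)
qed

lemma variation_locally_minimal: "eventually (\<lambda>e. variation 0 \<le> variation e) (at 0)"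
proof -
  have pos: "eventually (\<lambda>e. 0 < f e) (at 0)" if "isCont f 0" "0 < f 0" for f :: "real \<Rightarrow> real"
    using that unfolding isCont_def by (rule order_tendstoD(1))
  have "isCont D2 0" "isCont D4 0" unfolding D2_def D4_def cis_conv_exp by (intro continuous_intros)+
  have l: "0 < t2 - t1" "0 < t4 - t3" "cmod (cis \<beta>2) = 1" "cmod (cis \<beta>4) = 1" using times by auto
  note cont2 = tangent_continuous[OF \<open>isCont D2 0\<close> D_at_0(1) l(1,3)]
    and cont4 = tangent_continuous[OF \<open>isCont D4 0\<close> D_at_0(2) l(2,4)]
  have t0: "turn2 0 = 0" "turn4 0 = 0" using tangent2_at_0 tangent4_at_0 l by (simp_all add: turn2_def turn4_def)
  have "isCont turn2 0" "isCont turn4 0"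
    using cont2(3) cont4(3) unfolding turn2_def[abs_def] turn4_def[abs_def] .
  have D0: "(cmod (D2 0))^2 = (t2 - t1)^2 + k2^2" "(cmod (D4 0))^2 = (t4 - t3)^2 + k4^2"
    unfolding D_at_0 norm_mult norm_cis mult_1_right by (simp_all add: cmod_power2)
  have "eventually (\<lambda>e. 0 < (cmod (D2 e))^2 - k2^2) (at 0)"
    by (rule pos) (use D0 l in \<open>auto intro!: continuous_intros \<open>isCont D2 0\<close>\<close>)
  moreover have "eventually (\<lambda>e. 0 < (cmod (D4 e))^2 - k4^2) (at 0)"
    by (rule pos) (use D0 l in \<open>auto intro!: continuous_intros \<open>isCont D4 0\<close>\<close>)
  moreover have "eventually (\<lambda>e. 0 < Re (tangent_ratio k2 (cis \<beta>2) (D2 e))) (at 0)"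
    by (rule pos) (use tangent2_at_0 l cont2 in \<open>auto intro: isCont_Re\<close>)
  moreover have "eventually (\<lambda>e. 0 < Re (tangent_ratio k4 (cis \<beta>4) (D4 e))) (at 0)"
    by (rule pos) (use tangent4_at_0 l cont4 in \<open>auto intro: isCont_Re\<close>)
  moreover have "eventually (\<lambda>e. 0 < t1 + s1 * R * turn2 e) (at 0)"
    by (rule pos) (use times t0 in \<open>auto intro!: continuous_intros \<open>isCont turn2 0\<close>\<close>)
  moreover have "eventually (\<lambda>e. 0 < tm - t2 + s3 * R * (e - turn2 e)) (at 0)"
    by (rule pos) (use times t0 in \<open>auto intro!: continuous_intros \<open>isCont turn2 0\<close>\<close>)
  moreover have "eventually (\<lambda>e. 0 < t3 - tm + s3 * R * (turn4 e - e)) (at 0)"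
    by (rule pos) (use times t0 in \<open>auto intro!: continuous_intros \<open>isCont turn4 0\<close>\<close>)
  moreover have "eventually (\<lambda>e. 0 < L - t4 - s5 * R * turn4 e) (at 0)"
    by (rule pos) (use times t0 in \<open>auto intro!: continuous_intros \<open>isCont turn4 0\<close>\<close>)
  ultimately show ?thesis
    by eventually_elim (intro variation_ge, auto simp: algebra_simps)
qed

lemma variation_deriv:
  "(variation has_real_derivative Im (cnj (cis \<beta>4) * A) - Im (cnj (cis \<beta>2) * A)) (at 0)"
proof -
  have dD: "(D2 has_vector_derivative \<i> * A) (at 0)" "(D4 has_vector_derivative - (\<i> * A)) (at 0)"
    unfolding D2_def D4_def has_vector_derivative_def
    by (rule has_derivative_eq_rhs, (rule derivative_intros)+,
        auto intro!: ext simp: algebra_simps scaleR_conv_of_real)+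
  have "0 < t2 - t1" "0 < t4 - t3" using times by simp_all
  from DERIV_add[OF tangent_length_turn_deriv[OF dD(1) D_at_0(1) this(1) norm_cis]
      tangent_length_turn_deriv[OF dD(2) D_at_0(2) this(2) norm_cis]]
  have "((\<lambda>e. tangent_length k2 (D2 e) - k2 * turn2 e + (tangent_length k4 (D4 e) - k4 * turn4 e))
      has_real_derivative Re (cnj (cis \<beta>2) * (\<i> * A)) + Re (cnj (cis \<beta>4) * - (\<i> * A))) (at 0)"
    unfolding turn2_def turn4_def .
  moreover have "Re (cnj (cis \<beta>2) * (\<i> * A)) + Re (cnj (cis \<beta>4) * - (\<i> * A))
      = Im (cnj (cis \<beta>4) * A) - Im (cnj (cis \<beta>2) * A)" by simp
  ultimately show ?thesis unfolding variation_def[abs_def] by (simp only:)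
qed

lemma offsets_eq: "Im (cnj (cis \<beta>2) * A) = Im (cnj (cis \<beta>4) * A)"
proof -
  have "(*) (Im (cnj (cis \<beta>4) * A) - Im (cnj (cis \<beta>2) * A)) = (\<lambda>h. 0)"
    using variation_deriv variation_locally_minimal
    unfolding has_field_derivative_def by (rule has_derivative_local_min)
  from fun_cong[OF this, of 1] show ?thesis by simp
qed

lemma line_offsets:
  "line_offset xm (p t1) \<beta>2 = Im (cnj (cis \<beta>2) * A) - s3 * R"
  "line_offset xm (p t3) \<beta>4 = Im (cnj (cis \<beta>4) * A) - s3 * R"
proof -
  have "p t1 - xm = A + (of_real (t1 - t2) + \<i> * of_real (- (s3 * R))) * cis \<beta>2"
    by (simp add: centre_relations(5) A_def algebra_simps)
  thus "line_offset xm (p t1) \<beta>2 = Im (cnj (cis \<beta>2) * A) - s3 * R"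
    by (simp only: line_offset_def Im_cnj_cis_mult)
  have "p t3 - xm = A + (of_real 0 + \<i> * of_real (- (s3 * R))) * cis \<beta>4"
    by (simp add: A_def flip: centre_relations(4)) (simp add: turn_centre_def)
  thus "line_offset xm (p t3) \<beta>4 = Im (cnj (cis \<beta>4) * A) - s3 * R"
    by (simp only: line_offset_def Im_cnj_cis_mult)
qed

lemma line_offset_ne_0: "line_offset xm (p t1) \<beta>2 \<noteq> 0"
proof
  assume "line_offset xm (p t1) \<beta>2 = 0"
  hence Im: "Im (cnj (cis \<beta>2) * A) = s3 * R" "Im (cnj (cis \<beta>4) * A) = s3 * R"
    using line_offsets offsets_eq by simp_all
  have norm: "cmod A = \<bar>s3 * R\<bar>" using norm_A signs(2) R_pos by auto
  have A2: "A = \<i> * of_real (s3 * R) * cis \<beta>2" by (rule Im_cnj_eq_normD[OF norm_cis norm Im(1)])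
  moreover have "A = \<i> * of_real (s3 * R) * cis \<beta>4" by (rule Im_cnj_eq_normD[OF norm_cis norm Im(2)])
  ultimately have "\<i> * of_real (s3 * R) * cis \<beta>4 = \<i> * of_real (s3 * R) * cis \<beta>2" by simp
  hence same: "cis \<beta>4 = cis \<beta>2" using signs(2) R_pos by auto
  txt \<open>The arc \<open>C\<^sub>3\<close> can then be dropped, giving a shorter feasible path.\<close>
  have "L \<le> t1 + (t2 - t1) + 0 + (t4 - t3) + (L - t4)"
  proof (rule optimal_length_le[where \<beta>2'=\<beta>2 and \<beta>4'=\<beta>2 and \<gamma>=\<beta>2 and \<mu>=0])
    show "turn_centre R s3 xm \<beta>2 = O3"
      using A2 by (simp add: A_def turn_centre_def algebra_simps)
    show "cis (\<beta>2 + s5 * (L - t4) / R) = cis (\<alpha> L)"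
      by (simp add: headings(5) cis_mult[symmetric] same)
  qed (use times centre_relations(1,2) same headings(1) in auto)
  thus False using times by simp
qed

lemma inverse_lines_equal_radius:
  "\<exists>c2 c4 \<rho>. 0 < \<rho> \<and>
     inverse_set xm R (line_through (p t1) (\<alpha> t1)) = sphere c2 \<rho> - {xm} \<and>
     inverse_set xm R (line_through (p t3) (\<alpha> t3)) = sphere c4 \<rho> - {xm}"
proof -
  have same: "line_offset xm (p t3) \<beta>4 = line_offset xm (p t1) \<beta>2"
    using line_offsets offsets_eq by simp
  have "0 < R^2 / (2 * \<bar>line_offset xm (p t1) \<beta>2\<bar>)"
    using R_pos line_offset_ne_0 by simp
  with inverse_set_line_through[OF R_pos line_offset_ne_0]
    inverse_set_line_through[OF R_pos line_offset_ne_0[folded same], unfolded same]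
  show ?thesis unfolding \<beta>2_def \<beta>4_def by blast
qed

end

theorem lemma2:
  fixes R ai af L t1 t2 t3 t4 :: real and xi xm xf :: complex
    and p :: "real \<Rightarrow> complex" and \<alpha> :: "real \<Rightarrow> real"
  assumes "three_point_instance R xi ai xm xf af"
    and "three_point_optimal R xi ai xm xf af L p \<alpha>"
    and "type_CSCSC R xm L p \<alpha> t1 t2 t3 t4"
  shows "\<exists>c2 c4 \<rho>. 0 < \<rho> \<and>
           inverse_set xm R (line_through (p t1) (\<alpha> t1)) = sphere c2 \<rho> - {xm} \<and>
           inverse_set xm R (line_through (p t3) (\<alpha> t3)) = sphere c4 \<rho> - {xm}"
proof -
  have "0 < R" using assms(1) unfolding three_point_instance_def by simp
  obtain s1 s3 s5 tm where times: "0 < t1" "t1 < t2" "t2 < t3" "t3 < t4" "t4 < L"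
    and signs: "s1 \<in> {-1,1}" "s3 \<in> {-1,1}" "s5 \<in> {-1,1}"
    and pieces: "\<forall>t\<in>{0..t1}. \<alpha> t = \<alpha> 0 + s1 * t / R" "\<forall>t\<in>{t1..t2}. \<alpha> t = \<alpha> t1"
      "\<forall>t\<in>{t2..t3}. \<alpha> t = \<alpha> t2 + s3 * (t - t2) / R" "\<forall>t\<in>{t3..t4}. \<alpha> t = \<alpha> t3"
      "\<forall>t\<in>{t4..L}. \<alpha> t = \<alpha> t4 + s5 * (t - t4) / R"
    and tm: "tm \<in> {t2<..<t3}" "p tm = xm"
    using assms(3) unfolding type_CSCSC_def by blast
  have "t2 < tm" "tm < t3" using tm(1) by simp_all
  interpret optimal_CSCSC R ai af L xi xm xf p \<alpha> t1 t2 t3 t4 tm s1 s3 s5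
    by unfold_locales
      (fact \<open>0 < R\<close> assms(2) times \<open>t2 < tm\<close> \<open>tm < t3\<close> signs pieces[rule_format] tm(2))+
  show ?thesis by (rule inverse_lines_equal_radius)
qed

end
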